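(* Let $q$ be a prime power, let $n,k$ be integers with $3\le k\le n-2\le q-2$, and let $h=(k-1)+r$ with $1\le r\le k-2$. Let $\alpha_1,\dots,\alpha_n\in\mathbb{F}_q$ be pairwise distinct, let $G_{h,k}$ be the $k\times n$ matrix whose rows are $(\alpha_1^{e},\dots,\alpha_n^{e})$ for $e=0,1,\dots,k-2$ and $e=h$, let $\mathbf v=(v_1,\dots,v_n)\in(\mathbb{F}_q^* )^n$ and let $C_{h,\mathbf v}$ be the linear code generated by $G_{h,k}\cdot\mathrm{diag}(v_1,\dots,v_n)$. Let $u_i=\prod_{j\ne i}(\alpha_i-\alpha_j)^{-1}$ and $S_t=S_t(\alpha_1,\dots,\alpha_n)$. Then $C_{h,\mathbf v}$ is self-orthogonal if and only if there exists a polynomial $f(x)=\sum_{j=0}^{n-2k-r+1}f_jx^j\in\mathbb{F}_q[x]$ such that (1) $v_i^2=u_if(\alpha_i)$ for all $1\le i\le n$, and (2) $\sum_{j=s}^{s+r}f_jS_{j-s}=0$, where $s=n-2k-2r+1$ and $f_j=0$ for $j<0$.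
   Context: Convention: $0^0=1$. $S_t(x_1,\dots,x_m)=\sum_{t_1+\dots+t_m=t,\ t_i\ge0}x_1^{t_1}\cdots x_m^{t_m}$ is the complete homogeneous symmetric polynomial of degree $t$ ($S_0=1$). A linear code $C$ is self-orthogonal if $C\subseteq C^\perp$ (Euclidean dual). *)

theory Defs
  imports "HOL-Computational_Algebra.Polynomial"
begin

text \<open>Vectors of length n over a field are functions nat => 'a that vanish
  outside the index range 0..n-1 (coordinates 1..n of the paper are 0..n-1 here).\<close>

definition row_code :: "nat \<Rightarrow> nat \<Rightarrow> (nat \<Rightarrow> nat \<Rightarrow> 'a::field) \<Rightarrow> (nat \<Rightarrow> 'a) set" where
  "row_code m n G = {(\<lambda>i. if i < n then (\<Sum>j<m. c j * G j i) else 0) | c. True}"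

definition eucl_dual :: "nat \<Rightarrow> (nat \<Rightarrow> 'a::field) set \<Rightarrow> (nat \<Rightarrow> 'a) set" where
  "eucl_dual n C = {y. (\<forall>i\<ge>n. y i = 0) \<and> (\<forall>x\<in>C. (\<Sum>i<n. x i * y i) = 0)}"

definition self_orthogonal :: "nat \<Rightarrow> (nat \<Rightarrow> 'a::field) set \<Rightarrow> bool" where
  "self_orthogonal n C \<longleftrightarrow> C \<subseteq> eucl_dual n C"

definition Ghk_diag :: "nat \<Rightarrow> nat \<Rightarrow> (nat \<Rightarrow> 'a::field) \<Rightarrow> (nat \<Rightarrow> 'a) \<Rightarrow> nat \<Rightarrow> nat \<Rightarrow> 'a" where
  "Ghk_diag h k alpha v j i = (if j < k - 1 then alpha i ^ j else alpha i ^ h) * v i"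

text \<open>Complete homogeneous symmetric polynomial S_t(alpha_0,...,alpha_{n-1}), with 0^0 = 1.\<close>
definition complete_hom :: "nat \<Rightarrow> (nat \<Rightarrow> 'a::comm_ring_1) \<Rightarrow> nat \<Rightarrow> 'a" where
  "complete_hom n alpha t =
     (\<Sum>e\<in>{e::nat\<Rightarrow>nat. (\<forall>i\<ge>n. e i = 0) \<and> (\<Sum>i<n. e i) = t}. \<Prod>i<n. alpha i ^ e i)"

definition u_coef :: "nat \<Rightarrow> (nat \<Rightarrow> 'a::field) \<Rightarrow> nat \<Rightarrow> 'a" where
  "u_coef n alpha i = (\<Prod>j\<in>{..<n} - {i}. inverse (alpha i - alpha j))"

definition icoeff :: "'a::zero poly \<Rightarrow> int \<Rightarrow> 'a" where
  "icoeff f j = (if j < 0 then 0 else coeff f (nat j))"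

end

theory Submission
  imports Defs
begin

text \<open>Put w_i = v_i^2. The code is self-orthogonal iff the power sums sum_i w_i alpha_i^m
  vanish for every m that is a sum of two row exponents, i.e. for m <= 2k - 3 + r and for
  m = 2h. Lagrange interpolation shows that sum_i u_i p(alpha_i) is the coefficient of x^(n-1)
  of every p of degree < n; with the recursion of the complete homogeneous polynomials this
  gives sum_i u_i alpha_i^m = S_(m-n+1), which is 0 for m < n - 1. Writing w_i = u_i f(alpha_i)
  with f the interpolant of degree < n, the power sums of order <= M vanish exactly when
  deg f <= n - M - 2, and then the power sum of order 2h is sum_j f_j S_(j-s).\<close>

definition exponent_vectors :: "nat \<Rightarrow> nat \<Rightarrow> (nat \<Rightarrow> nat) set" where
  "exponent_vectors n t = {e. (\<forall>i\<ge>n. e i = 0) \<and> (\<Sum>i<n. e i) = t}"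

lemma complete_hom_exponent_vectors:
  "complete_hom n alpha t = (\<Sum>e\<in>exponent_vectors n t. \<Prod>i<n. alpha i ^ e i)"
  unfolding complete_hom_def exponent_vectors_def ..

lemma finite_exponent_vectors: "finite (exponent_vectors n t)"
proof (rule finite_subset)
  show "exponent_vectors n t \<subseteq> {e. \<forall>i. (i \<in> {..<n} \<longrightarrow> e i \<in> {..t}) \<and> (i \<notin> {..<n} \<longrightarrow> e i = 0)}"
  proof (intro subsetI CollectI allI conjI impI)
    fix e i assume e: "e \<in> exponent_vectors n t"
    show "e i = 0" if "i \<notin> {..<n}" using e that by (simp add: exponent_vectors_def)
    show "e i \<in> {..t}" if "i \<in> {..<n}"
      using e sum_nonneg_leq_bound[of "{..<n}" e t i] that by (simp add: exponent_vectors_def)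
  qed
qed (rule finite_set_of_finite_funs; simp)

lemma exponent_vectors_0: "exponent_vectors n 0 = {\<lambda>_. 0}"
  by (auto simp: exponent_vectors_def intro!: ext) (metis lessThan_iff not_le)

lemma complete_hom_0 [simp]: "complete_hom n alpha 0 = 1"
  by (simp add: complete_hom_exponent_vectors exponent_vectors_0)

lemma complete_hom_0_Suc [simp]: "complete_hom 0 alpha (Suc t) = 0"
  by (simp add: complete_hom_exponent_vectors exponent_vectors_def)

lemma exponent_vectors_Suc_Suc:
  fixes n t :: nat
  defines "bump \<equiv> \<lambda>e. e(n := Suc (e n))"
  shows "exponent_vectors (Suc n) (Suc t) =
           exponent_vectors n (Suc t) \<union> bump ` exponent_vectors (Suc n) t"
    and "exponent_vectors n (Suc t) \<inter> bump ` exponent_vectors (Suc n) t = {}"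
proof -
  show "exponent_vectors n (Suc t) \<inter> bump ` exponent_vectors (Suc n) t = {}"
    by (auto simp: bump_def exponent_vectors_def)
  have "e \<in> bump ` exponent_vectors (Suc n) t"
    if "e \<in> exponent_vectors (Suc n) (Suc t)" "e n \<noteq> 0" for e
  proof
    show "e = bump (e(n := e n - 1))" using that(2) by (auto simp: bump_def)
    have "(\<Sum>i<Suc n. (e(n := e n - 1)) i) = (\<Sum>i<n. e i) + (e n - 1)"
      by simp
    then show "e(n := e n - 1) \<in> exponent_vectors (Suc n) t"
      using that by (simp add: exponent_vectors_def)
  qed
  moreover have "exponent_vectors n (Suc t) \<subseteq> exponent_vectors (Suc n) (Suc t)"
    by (auto simp: exponent_vectors_def)
  moreover have "bump ` exponent_vectors (Suc n) t \<subseteq> exponent_vectors (Suc n) (Suc t)"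
    by (auto simp: bump_def exponent_vectors_def)
  moreover have "e \<in> exponent_vectors n (Suc t)"
    if "e \<in> exponent_vectors (Suc n) (Suc t)" "e n = 0" for e
    using that by (auto simp: exponent_vectors_def) (metis Suc_leI le_neq_implies_less)
  ultimately show "exponent_vectors (Suc n) (Suc t) =
           exponent_vectors n (Suc t) \<union> bump ` exponent_vectors (Suc n) t"
    by blast
qed

lemma complete_hom_Suc_Suc:
  "complete_hom (Suc n) alpha (Suc t) =
     complete_hom n alpha (Suc t) + alpha n * complete_hom (Suc n) alpha t"
proof -
  let ?bump = "\<lambda>e::nat \<Rightarrow> nat. e(n := Suc (e n))"
  have "inj ?bump"
  proof (rule injI)
    fix x y :: "nat \<Rightarrow> nat" assume eq: "?bump x = ?bump y"
    show "x = y"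
    proof
      fix i show "x i = y i" using fun_cong[OF eq, of i] by (cases "i = n") auto
    qed
  qed
  then have "complete_hom (Suc n) alpha (Suc t) =
      (\<Sum>e\<in>exponent_vectors n (Suc t). \<Prod>i<Suc n. alpha i ^ e i) +
      (\<Sum>e\<in>exponent_vectors (Suc n) t. \<Prod>i<Suc n. alpha i ^ ?bump e i)"
    unfolding complete_hom_exponent_vectors exponent_vectors_Suc_Suc(1)
    by (simp add: sum.union_disjoint finite_exponent_vectors exponent_vectors_Suc_Suc(2)
                  sum.reindex inj_on_subset)
  also have "(\<Sum>e\<in>exponent_vectors n (Suc t). \<Prod>i<Suc n. alpha i ^ e i) =
      complete_hom n alpha (Suc t)"
    unfolding complete_hom_exponent_vectors by (rule sum.cong) (auto simp: exponent_vectors_def)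
  also have "(\<Sum>e\<in>exponent_vectors (Suc n) t. \<Prod>i<Suc n. alpha i ^ ?bump e i) =
      alpha n * complete_hom (Suc n) alpha t"
    unfolding complete_hom_exponent_vectors sum_distrib_left
    by (rule sum.cong) (auto simp: mult_ac)
  finally show ?thesis .
qed

definition lagrange_basis :: "nat \<Rightarrow> (nat \<Rightarrow> 'a::field) \<Rightarrow> nat \<Rightarrow> 'a poly" where
  "lagrange_basis n alpha i = (\<Prod>j\<in>{..<n} - {i}. [:- alpha j, 1:])"

lemma degree_lagrange_basis: "i < n \<Longrightarrow> degree (lagrange_basis n alpha i) = n - 1"
  unfolding lagrange_basis_def by (subst degree_prod_eq_sum_degree) auto

lemma coeff_lagrange_basis_top:
  assumes "i < n" shows "coeff (lagrange_basis n alpha i) (n - 1) = 1"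
proof -
  have "lead_coeff (lagrange_basis n alpha i) = 1"
    unfolding lagrange_basis_def lead_coeff_prod by simp
  then show ?thesis using degree_lagrange_basis[OF assms, of alpha] by simp
qed

lemma poly_lagrange_basis_other:
  "k < n \<Longrightarrow> k \<noteq> i \<Longrightarrow> poly (lagrange_basis n alpha i) (alpha k) = 0"
  unfolding lagrange_basis_def poly_prod by (rule prod_zero) auto

lemma u_coef_mult_poly_lagrange_basis:
  assumes "inj_on alpha {..<n}" and "i < n"
  shows "u_coef n alpha i * poly (lagrange_basis n alpha i) (alpha i) = 1"
proof -
  have "u_coef n alpha i * poly (lagrange_basis n alpha i) (alpha i) =
      (\<Prod>j\<in>{..<n} - {i}. inverse (alpha i - alpha j) * (alpha i - alpha j))"
    unfolding u_coef_def lagrange_basis_def poly_prod by (simp add: prod.distrib)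
  also have "\<dots> = 1"
    using assms by (intro prod.neutral) (auto simp: inj_on_eq_iff)
  finally show ?thesis .
qed

definition lagrange_combination :: "nat \<Rightarrow> (nat \<Rightarrow> 'a::field) \<Rightarrow> (nat \<Rightarrow> 'a) \<Rightarrow> 'a poly" where
  "lagrange_combination n alpha c = (\<Sum>i<n. smult (c i) (lagrange_basis n alpha i))"

lemma degree_lagrange_combination: "degree (lagrange_combination n alpha c) \<le> n - 1"
  unfolding lagrange_combination_def
  by (intro degree_sum_le order.trans[OF degree_smult_le]) (simp_all add: degree_lagrange_basis)

lemma coeff_lagrange_combination_top:
  "coeff (lagrange_combination n alpha c) (n - 1) = (\<Sum>i<n. c i)"
  unfolding lagrange_combination_def coeff_sum coeff_smult
  using coeff_lagrange_basis_top by (intro sum.cong) auto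

lemma u_coef_mult_poly_lagrange_combination:
  assumes "inj_on alpha {..<n}" and "k < n"
  shows "u_coef n alpha k * poly (lagrange_combination n alpha c) (alpha k) = c k"
proof -
  have "poly (lagrange_combination n alpha c) (alpha k) =
      (\<Sum>i<n. c i * poly (lagrange_basis n alpha i) (alpha k))"
    by (simp add: lagrange_combination_def poly_sum)
  also have "\<dots> = (\<Sum>i\<in>{k}. c i * poly (lagrange_basis n alpha i) (alpha k))"
    using assms(2) by (intro sum.mono_neutral_right) (auto simp: poly_lagrange_basis_other)
  finally show ?thesis
    using u_coef_mult_poly_lagrange_basis[OF assms] by (simp add: mult.left_commute)
qed

lemma u_coef_nonzero: "inj_on alpha {..<n} \<Longrightarrow> i < n \<Longrightarrow> u_coef n alpha i \<noteq> 0"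
  using u_coef_mult_poly_lagrange_basis by force

lemma coeff_top_eq_sum_u_coef_poly:
  fixes p :: "'a::field poly"
  assumes inj: "inj_on alpha {..<n}" and deg: "degree p < n"
  shows "coeff p (n - 1) = (\<Sum>i<n. u_coef n alpha i * poly p (alpha i))"
proof -
  let ?L = "lagrange_combination n alpha (\<lambda>i. u_coef n alpha i * poly p (alpha i))"
  have "p = ?L"
  proof (rule poly_eqI_degree)
    fix x assume "x \<in> alpha ` {..<n}"
    then obtain k where "k < n" "x = alpha k" by auto
    with u_coef_mult_poly_lagrange_combination[OF inj \<open>k < n\<close>] u_coef_nonzero[OF inj \<open>k < n\<close>]
    show "poly p x = poly ?L x"
      by (metis mult_left_cancel)
  next
    show "degree p < card (alpha ` {..<n})" "degree ?L < card (alpha ` {..<n})"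
      using deg degree_lagrange_combination[of n alpha] card_image[OF inj]
      by (simp_all add: le_less_trans[of _ "n - 1"])
  qed
  then show ?thesis by (metis coeff_lagrange_combination_top)
qed

definition u_power_sum :: "nat \<Rightarrow> (nat \<Rightarrow> 'a::field) \<Rightarrow> nat \<Rightarrow> 'a" where
  "u_power_sum n alpha m = (\<Sum>i<n. u_coef n alpha i * alpha i ^ m)"

lemma u_coef_Suc:
  assumes "inj_on alpha {..<Suc n}" and "i < n"
  shows "u_coef (Suc n) alpha i * (alpha i - alpha n) = u_coef n alpha i"
proof -
  have "{..<Suc n} - {i} = insert n ({..<n} - {i})"
    using assms(2) by auto
  moreover have "alpha i - alpha n \<noteq> 0"
    using assms by (auto simp: inj_on_eq_iff)
  ultimately show ?thesis
    by (simp add: u_coef_def)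
qed

lemma u_power_sum_Suc_Suc:
  assumes "inj_on alpha {..<Suc n}"
  shows "u_power_sum (Suc n) alpha (Suc m) = u_power_sum n alpha m + alpha n * u_power_sum (Suc n) alpha m"
proof -
  have "u_power_sum (Suc n) alpha (Suc m) - alpha n * u_power_sum (Suc n) alpha m =
      (\<Sum>i<Suc n. u_coef (Suc n) alpha i * (alpha i - alpha n) * alpha i ^ m)"
    unfolding u_power_sum_def sum_distrib_left sum_subtractf[symmetric]
    by (rule sum.cong) (auto simp: algebra_simps)
  also have "\<dots> = (\<Sum>i<n. u_coef (Suc n) alpha i * (alpha i - alpha n) * alpha i ^ m)"
    by simp
  also have "\<dots> = u_power_sum n alpha m"
    unfolding u_power_sum_def by (rule sum.cong) (auto simp: u_coef_Suc[OF assms])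
  finally show ?thesis
    by (simp add: algebra_simps)
qed

theorem u_power_sum_eq_complete_hom:
  assumes "inj_on alpha {..<n}"
  shows "u_power_sum n alpha m = (if n \<le> m + 1 then complete_hom n alpha (m + 1 - n) else 0)"
  using assms
proof (induction m arbitrary: n)
  case 0
  show ?case
  proof (cases "n = 0")
    case False
    then have "coeff 1 (n - 1) = u_power_sum n alpha 0"
      using coeff_top_eq_sum_u_coef_poly[OF "0.prems", of 1] by (simp add: u_power_sum_def)
    then show ?thesis
      using False by (auto simp: coeff_1)
  qed (simp add: u_power_sum_def)
next
  case (Suc m)
  show ?case
  proof (cases n)
    case (Suc n')
    have inj': "inj_on alpha {..<n'}"
      using Suc.prems \<open>n = Suc n'\<close> by (auto intro: inj_on_subset)
    have rec: "u_power_sum n alpha (Suc m) =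
        (if n' \<le> m + 1 then complete_hom n' alpha (m + 1 - n') else 0) +
        alpha n' * (if n \<le> m + 1 then complete_hom n alpha (m + 1 - n) else 0)"
      using u_power_sum_Suc_Suc[of alpha n' m] Suc.IH[OF inj'] Suc.IH[OF Suc.prems] Suc.prems \<open>n = Suc n'\<close>
      by simp
    consider "n' \<le> m" | "n' = Suc m" | "Suc m < n'" by linarith
    then show ?thesis
    proof cases
      case 1
      then have "m + 1 - n' = Suc (m - n')" "Suc m + 1 - n = Suc (m - n')" "m + 1 - n = m - n'"
        using \<open>n = Suc n'\<close> by auto
      then show ?thesis
        using rec 1 complete_hom_Suc_Suc[of n' alpha "m - n'"] \<open>n = Suc n'\<close> by simp
    qed (use rec \<open>n = Suc n'\<close> in simp_all)
  qed (simp add: u_power_sum_def)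
qed

lemma sum_weighted_power_eq_u_power_sums:
  assumes "\<forall>i<n. w i = u_coef n alpha i * poly f (alpha i)"
  shows "(\<Sum>i<n. w i * alpha i ^ m) = (\<Sum>j\<le>degree f. coeff f j * u_power_sum n alpha (j + m))"
proof -
  have "(\<Sum>i<n. w i * alpha i ^ m) =
      (\<Sum>i<n. \<Sum>j\<le>degree f. coeff f j * (u_coef n alpha i * alpha i ^ (j + m)))"
    using assms by (intro sum.cong refl)
      (simp add: poly_altdef sum_distrib_left sum_distrib_right power_add mult_ac)
  also have "\<dots> = (\<Sum>j\<le>degree f. coeff f j * u_power_sum n alpha (j + m))"
    unfolding u_power_sum_def by (subst sum.swap) (simp add: sum_distrib_left)
  finally show ?thesis .
qed

lemma interpolating_poly_if_power_sums_vanish: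
  fixes alpha w :: "nat \<Rightarrow> 'a::field"
  assumes inj: "inj_on alpha {..<n}"
    and vanish: "\<forall>m\<le>M. (\<Sum>i<n. w i * alpha i ^ m) = 0"
  shows "\<exists>f. (\<forall>j. n \<le> j + M + 1 \<longrightarrow> coeff f j = 0) \<and>
             (\<forall>i<n. w i = u_coef n alpha i * poly f (alpha i))"
proof (intro exI conjI allI impI)
  let ?g = "lagrange_combination n alpha w"
  show rep: "w i = u_coef n alpha i * poly ?g (alpha i)" if "i < n" for i
    using u_coef_mult_poly_lagrange_combination[OF inj that] by simp
  fix j assume j: "n \<le> j + M + 1"
  show "coeff ?g j = 0"
  proof (rule ccontr)
    assume "coeff ?g j \<noteq> 0"
    then have "n \<noteq> 0"
      by (metis coeff_0 lagrange_combination_def lessThan_0 sum.empty)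
    define d where "d = degree ?g"
    have "j \<le> d" "d \<le> n - 1" "lead_coeff ?g \<noteq> 0"
      using \<open>coeff ?g j \<noteq> 0\<close> le_degree degree_lagrange_combination by (auto simp: d_def)
    define e where "e = n - 1 - d"
    define p where "p = monom 1 e * ?g"
    have "e + d = n - 1"
      using \<open>d \<le> n - 1\<close> by (simp add: e_def)
    have "degree p \<le> e + d"
      unfolding p_def d_def by (rule order.trans[OF degree_mult_le]) (simp add: degree_monom_eq)
    then have "degree p < n"
      using \<open>e + d = n - 1\<close> \<open>n \<noteq> 0\<close> by linarith
    have "n - 1 - e = d" "\<not> n - 1 < e"
      using \<open>e + d = n - 1\<close> by auto
    then have "lead_coeff ?g = coeff p (n - 1)"
      by (simp add: p_def coeff_monom_mult d_def)
    also have "\<dots> = (\<Sum>i<n. u_coef n alpha i * poly p (alpha i))"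
      using \<open>degree p < n\<close> by (rule coeff_top_eq_sum_u_coef_poly[OF inj])
    also have "\<dots> = (\<Sum>i<n. w i * alpha i ^ e)"
      by (rule sum.cong) (auto simp: p_def poly_monom rep mult_ac)
    also have "\<dots> = 0"
      using vanish \<open>j \<le> d\<close> j by (simp add: e_def)
    finally show False
      using \<open>lead_coeff ?g \<noteq> 0\<close> by simp
  qed
qed

theorem power_sums_vanish_iff_interpolating_poly:
  fixes alpha w :: "nat \<Rightarrow> 'a::field"
  assumes inj: "inj_on alpha {..<n}"
  shows "(\<forall>m\<le>M. (\<Sum>i<n. w i * alpha i ^ m) = 0) \<longleftrightarrow>
    (\<exists>f. (\<forall>j. n \<le> j + M + 1 \<longrightarrow> coeff f j = 0) \<and>
         (\<forall>i<n. w i = u_coef n alpha i * poly f (alpha i)))"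
proof
  assume "\<exists>f. (\<forall>j. n \<le> j + M + 1 \<longrightarrow> coeff f j = 0) \<and>
              (\<forall>i<n. w i = u_coef n alpha i * poly f (alpha i))"
  then obtain f where bound: "\<forall>j. n \<le> j + M + 1 \<longrightarrow> coeff f j = 0"
    and rep: "\<forall>i<n. w i = u_coef n alpha i * poly f (alpha i)"
    by blast
  show "\<forall>m\<le>M. (\<Sum>i<n. w i * alpha i ^ m) = 0"
  proof (intro allI impI)
    fix m assume "m \<le> M"
    have "coeff f j * u_power_sum n alpha (j + m) = 0" for j
      using bound \<open>m \<le> M\<close> by (cases "n \<le> j + M + 1") (simp_all add: u_power_sum_eq_complete_hom[OF inj])
    then show "(\<Sum>i<n. w i * alpha i ^ m) = 0"
      unfolding sum_weighted_power_eq_u_power_sums[OF rep] by (intro sum.neutral) blast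
  qed
qed (rule interpolating_poly_if_power_sums_vanish[OF inj])

lemma sum_weighted_power_eq_complete_hom_sum:
  fixes alpha w :: "nat \<Rightarrow> 'a::field" and s :: int
  assumes inj: "inj_on alpha {..<n}"
    and rep: "\<forall>i<n. w i = u_coef n alpha i * poly f (alpha i)"
    and bound: "\<forall>j. s + int r < int j \<longrightarrow> coeff f j = 0"
    and s: "s = int n - int m - 1"
  shows "(\<Sum>i<n. w i * alpha i ^ m) =
    (\<Sum>j\<in>{s..s + int r}. icoeff f j * complete_hom n alpha (nat (j - s)))"
proof -
  define g where "g j = icoeff f j * (if s \<le> j then complete_hom n alpha (nat (j - s)) else 0)" for j
  have "(\<Sum>i<n. w i * alpha i ^ m) = (\<Sum>j\<le>degree f. g (int j))"
    unfolding sum_weighted_power_eq_u_power_sums[OF rep]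
  proof (rule sum.cong)
    fix j
    have "s \<le> int j \<longleftrightarrow> n \<le> j + m + 1" "nat (int j - s) = j + m + 1 - n"
      using s by auto
    then show "coeff f j * u_power_sum n alpha (j + m) = g (int j)"
      by (simp add: u_power_sum_eq_complete_hom[OF inj] g_def icoeff_def)
  qed simp
  also have "\<dots> = sum g (int ` {0..degree f})"
    by (simp add: sum.reindex atLeast0AtMost)
  also have "\<dots> = sum g {0..int (degree f)}"
    by (simp add: image_int_atLeastAtMost)
  also have "\<dots> = (\<Sum>j\<in>{s..s + int r}. icoeff f j * complete_hom n alpha (nat (j - s)))"
  proof (rule sum.mono_neutral_cong)
    fix j assume "j \<in> {s..s + int r} - {0..int (degree f)}"
    then show "icoeff f j * complete_hom n alpha (nat (j - s)) = 0"
      by (auto simp: icoeff_def coeff_eq_0)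
  next
    fix j assume "j \<in> {0..int (degree f)} - {s..s + int r}"
    then show "g j = 0"
      using bound by (auto simp: g_def icoeff_def)
  qed (auto simp: g_def)
  finally show ?thesis .
qed

lemma self_orthogonal_row_code_iff:
  fixes G :: "nat \<Rightarrow> nat \<Rightarrow> 'a::field"
  shows "self_orthogonal n (row_code m n G) \<longleftrightarrow> (\<forall>j<m. \<forall>l<m. (\<Sum>i<n. G j i * G l i) = 0)"
proof
  assume so: "self_orthogonal n (row_code m n G)"
  have row: "(\<lambda>i. if i < n then G j i else 0) \<in> row_code m n G" if "j < m" for j
    unfolding row_code_def using that
    by (auto intro!: exI[of _ "\<lambda>j'. if j' = j then 1 else 0"] simp: if_distrib[of "\<lambda>c. c * _"] cong: if_cong)
  show "\<forall>j<m. \<forall>l<m. (\<Sum>i<n. G j i * G l i) = 0"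
    using so row unfolding self_orthogonal_def eucl_dual_def by fastforce
next
  assume orth: "\<forall>j<m. \<forall>l<m. (\<Sum>i<n. G j i * G l i) = 0"
  have "(\<Sum>i<n. (\<Sum>j<m. c j * G j i) * (\<Sum>l<m. d l * G l i)) = 0" for c d
  proof -
    have "(\<Sum>i<n. (\<Sum>j<m. c j * G j i) * (\<Sum>l<m. d l * G l i)) =
        (\<Sum>i<n. \<Sum>j<m. \<Sum>l<m. c j * d l * (G j i * G l i))"
      by (simp add: sum_product mult_ac)
    also have "\<dots> = (\<Sum>j<m. \<Sum>l<m. c j * d l * (\<Sum>i<n. G j i * G l i))"
      by (simp add: sum_distrib_left sum.swap[of _ "{..<n}"])
    also have "\<dots> = 0"
      using orth by simp
    finally show ?thesis .
  qed
  then show "self_orthogonal n (row_code m n G)"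
    unfolding self_orthogonal_def eucl_dual_def row_code_def by auto
qed

definition row_exponent :: "nat \<Rightarrow> nat \<Rightarrow> nat \<Rightarrow> nat" where
  "row_exponent h k j = (if j < k - 1 then j else h)"

lemma inner_Ghk_diag_rows:
  "(\<Sum>i<n. Ghk_diag h k alpha v j i * Ghk_diag h k alpha v l i) =
     (\<Sum>i<n. v i ^ 2 * alpha i ^ (row_exponent h k j + row_exponent h k l))"
  unfolding Ghk_diag_def row_exponent_def
  by (rule sum.cong) (auto simp: power_add power2_eq_square mult_ac)

lemma row_exponent_sums:
  assumes "r + 2 \<le> k" and h: "h = (k - 1) + r"
  shows "(\<forall>j<k. \<forall>l<k. P (row_exponent h k j + row_exponent h k l)) \<longleftrightarrow>
    (\<forall>m\<le>2 * k - 3 + r. P m) \<and> P (2 * h)"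
proof
  assume P: "\<forall>j<k. \<forall>l<k. P (row_exponent h k j + row_exponent h k l)"
  have "P m" if "m \<le> 2 * k - 3 + r" for m
  proof (cases "h \<le> m")
    case True
    then have "row_exponent h k (k - 1) + row_exponent h k (m - h) = m"
      using that assms by (simp add: row_exponent_def)
    then show ?thesis
      using P[rule_format, of "k - 1" "m - h"] True that assms by simp
  next
    case False
    define j where "j = min m (k - 2)"
    have "j < k - 1" "m - j < k - 1"
      using False assms by (auto simp: j_def min_def)
    moreover have "row_exponent h k j + row_exponent h k (m - j) = m"
      using calculation by (simp add: row_exponent_def j_def)
    ultimately show ?thesis
      using P[rule_format, of j "m - j"] by simp
  qed
  moreover have "P (2 * h)"
    using P[rule_format, of "k - 1" "k - 1"] assms by (simp add: row_exponent_def mult_2)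
  ultimately show "(\<forall>m\<le>2 * k - 3 + r. P m) \<and> P (2 * h)"
    by blast
next
  assume "(\<forall>m\<le>2 * k - 3 + r. P m) \<and> P (2 * h)"
  moreover have "row_exponent h k j + row_exponent h k l \<le> 2 * k - 3 + r \<or>
      row_exponent h k j + row_exponent h k l = 2 * h" if "j < k" "l < k" for j l
    using that assms by (auto simp: row_exponent_def)
  ultimately show "\<forall>j<k. \<forall>l<k. P (row_exponent h k j + row_exponent h k l)"
    by fastforce
qed

theorem theorem4p11:
  fixes alpha v :: "nat \<Rightarrow> 'a::{finite,field}"
    and n k h r :: nat
  assumes "3 \<le> k" and "k + 2 \<le> n" and "n \<le> card (UNIV :: 'a set)"
    and "1 \<le> r" and "r + 2 \<le> k" and "h = (k - 1) + r"
    and "inj_on alpha {..<n}"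
    and "\<forall>i<n. v i \<noteq> 0"
  shows "self_orthogonal n (row_code k n (Ghk_diag h k alpha v)) \<longleftrightarrow>
    (\<exists>f :: 'a poly.
       (\<forall>j. int j > int n - 2 * int k - int r + 1 \<longrightarrow> coeff f j = 0) \<and>
       (\<forall>i<n. v i ^ 2 = u_coef n alpha i * poly f (alpha i)) \<and>
       (let s = int n - 2 * int k - 2 * int r + 1 in
          (\<Sum>j\<in>{s..s + int r}. icoeff f j * complete_hom n alpha (nat (j - s))) = 0))"
proof -
  let ?P = "\<lambda>m. (\<Sum>i<n. v i ^ 2 * alpha i ^ m) = 0"
  let ?bound = "\<lambda>f :: 'a poly. \<forall>j. int j > int n - 2 * int k - int r + 1 \<longrightarrow> coeff f j = 0"
  let ?rep = "\<lambda>f :: 'a poly. \<forall>i<n. v i ^ 2 = u_coef n alpha i * poly f (alpha i)"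
  let ?cond = "\<lambda>f. let s = int n - 2 * int k - 2 * int r + 1 in
    (\<Sum>j\<in>{s..s + int r}. icoeff f j * complete_hom n alpha (nat (j - s))) = 0"
  have "self_orthogonal n (row_code k n (Ghk_diag h k alpha v)) \<longleftrightarrow>
      (\<forall>m\<le>2 * k - 3 + r. ?P m) \<and> ?P (2 * h)"
    unfolding self_orthogonal_row_code_iff inner_Ghk_diag_rows
    by (rule row_exponent_sums) (use assms in auto)
  moreover have "(\<forall>m\<le>2 * k - 3 + r. ?P m) \<longleftrightarrow> (\<exists>f. ?bound f \<and> ?rep f)"
  proof -
    have "n \<le> j + (2 * k - 3 + r) + 1 \<longleftrightarrow> int j > int n - 2 * int k - int r + 1" for j
      using assms(1) by linarith
    then show ?thesis
      using power_sums_vanish_iff_interpolating_poly[OF assms(7), of "2 * k - 3 + r" "\<lambda>i. v i ^ 2"]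
      by simp
  qed
  moreover have "?P (2 * h) \<longleftrightarrow> ?cond f" if "?bound f" "?rep f" for f
  proof -
    have "(\<Sum>i<n. v i ^ 2 * alpha i ^ (2 * h)) =
        (let s = int n - 2 * int k - 2 * int r + 1 in
          \<Sum>j\<in>{s..s + int r}. icoeff f j * complete_hom n alpha (nat (j - s)))"
      unfolding Let_def using assms that
      by (intro sum_weighted_power_eq_complete_hom_sum) auto
    then show ?thesis
      by (simp add: Let_def)
  qed
  ultimately show ?thesis
    by blast
qed

end
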